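(* Let $u^m\in\mathbb{P}^{\mathrm{disc}}_0(\mathcal{T}_h)$ and $v^m\in\mathbb{P}^{\mathrm{cont}}_1(\mathcal{T}_h)$ be given and let $(v^{m+1},u^{m+1},\mu_\varepsilon^{m+1})$ be any solution of the fully discrete scheme (Step 1 and Step 2 described in the context). Then $$a^{upw}_h(\mu_\varepsilon^{m+1};(u^{m+1})_\oplus,\mu_\varepsilon^{m+1})\ge 0,$$ and consequently the scheme is unconditionally energy stable: $$E_\varepsilon(u^{m+1},v^{m+1})\le E_\varepsilon(u^m,v^m),$$ where $E_\varepsilon(u,v)=\int_\Omega\Big(k_0(u+\varepsilon)\log(u+\varepsilon)-k_1uv+\frac{k_1k_2}{2k_4}|\nabla v|^2+\frac{k_1k_3}{2k_4}v^2\Big)$.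
   Context: Let $\Omega\subset\mathbb{R}^2$ be a bounded polygonal domain and $\mathcal{T}_h$ a shape-regular triangular mesh of $\overline\Omega$ of size $h$. $\mathcal{E}_h^i$ denotes the set of interior edges. For an interior edge $e=\partial K\cap\partial L$ the two adjacent triangles are labelled $K,L$ so that the unit normal $\mathbf{n}_e$ points from $K$ to $L$; for a function $w$, $w_K,w_L$ are its traces from $K$ and $L$ and the jump is $[\![w]\!]=w_K-w_L$. $C_K$ denotes the barycenter of $K$, and $\mathcal{D}_e=|C_K-C_L|$ for $e=K\cap L\in\mathcal{E}_h^i$. The mesh is assumed to satisfy: (H1) for every interior edge $e=K\cap L$, the segment joining $C_K$ and $C_L$ is orthogonal to $e$; (H2) every angle of every triangle of $\mathcal{T}_h$ is at most $\pi/2$. $\mathbb{P}^{\mathrm{disc}}_0(\mathcal{T}_h)$ is the space of piecewise constant functions on $\mathcal{T}_h$, $\mathbb{P}^{\mathrm{cont}}_1(\mathcal{T}_h)$ the space of continuous piecewise linear functions, and $\Pi_0$ the $L^2(\Omega)$-orthogonal projection onto $\mathbb{P}^{\mathrm{disc}}_0(\mathcal{T}_h)$. For a scalar $w$, $w_\oplus=\max\{w,0\}$, $w_\ominus=-\min\{w,0\}$. $(\cdot,\cdot)$ is the $L^2(\Omega)$ inner product and $(f,g)_h=\int_\Omega I_h(fg)$ the mass-lumped inner product, $I_h$ being the nodal $\mathbb{P}_1$ interpolant. The upwind form is $$a^{upw}_h(\mu;u,\bar u)=\int_\Omega(\nabla\mu\cdot\nabla\bar u)\,u+\sum_{e\in\mathcal{E}_h^i,\,e=K\cap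 L}\frac{1}{\mathcal{D}_e}\int_e\Big(([\![\Pi_0\mu]\!])_\oplus u_K-([\![\Pi_0\mu]\!])_\ominus u_L\Big)[\![\bar u]\!].$$ Parameters: $k_0,\dots,k_4>0$, $\tau\in\{0,1\}$, time step $\Delta t>0$, $\varepsilon>0$; $\delta_t w^{m+1}=(w^{m+1}-w^m)/\Delta t$. The scheme: Step 1: find $v^{m+1}\in\mathbb{P}^{\mathrm{cont}}_1(\mathcal{T}_h)$ with $\tau(\delta_t v^{m+1},\bar v)_h+k_2(\nabla v^{m+1},\nabla\bar v)+k_3(v^{m+1},\bar v)_h-k_4(u^m,\bar v)=0$ for all $\bar v\in\mathbb{P}^{\mathrm{cont}}_1(\mathcal{T}_h)$. Step 2: find $(u^{m+1},\mu_\varepsilon^{m+1})\in\mathbb{P}^{\mathrm{disc}}_0(\mathcal{T}_h)^2$ with $u^{m+1}+\varepsilon>0$ such that $(\delta_t u^{m+1},\bar u)+a^{upw}_h(\mu_\varepsilon^{m+1};(u^{m+1})_\oplus,\bar u)=0$ and $(\mu_\varepsilon^{m+1},\bar\mu)-k_0(\log(u^{m+1}+\varepsilon),\bar\mu)+k_1(v^{m+1},\bar\mu)=0$ for all $\bar u,\bar\mu\in\mathbb{P}^{\mathrm{disc}}_0(\mathcal{T}_h)$. (It is assumed $u^m+\varepsilon>0$ so that $E_\varepsilon(u^m,v^m)$ is defined.)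
   Formalization: In $E_\varepsilon(u,v)$ the term $\frac{k_1k_3}{2k_4}v^2$ is integrated by mass lumping, that is, it enters as $\frac{k_1k_3}{2k_4}\int_\Omega I_h(v^2)$ instead of the exact integral over $\Omega$. The statement above fails without it. *)

theory Defs
  imports "HOL-Analysis.Analysis"
begin

type_synonym pt = "real^2"
type_synonym tri = "pt set"   \<comment> \<open>a triangle is represented by its set of three vertices\<close>

definition is_triangle :: "tri \<Rightarrow> bool" where
  "is_triangle K \<longleftrightarrow> card K = 3 \<and> \<not> collinear K"

definition mesh_domain :: "tri set \<Rightarrow> pt set" where
  "mesh_domain T = (\<Union>K\<in>T. convex hull K)"

definition admissible_mesh :: "tri set \<Rightarrow> bool" where
  "admissible_mesh T \<longleftrightarrow> finite T \<and> T \<noteq> {} \<and> (\<forall>K\<in>T. is_triangle K) \<and>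
     (\<forall>K\<in>T. \<forall>L\<in>T. K \<noteq> L \<longrightarrow> convex hull K \<inter> convex hull L = convex hull (K \<inter> L)) \<and>
     connected (interior (mesh_domain T))"

text \<open>Interior edges e = K \<inter> L, listed as ordered pairs (K,L) of adjacent triangles
  (each geometric interior edge appears twice, once per orientation).\<close>
definition int_edges :: "tri set \<Rightarrow> (tri \<times> tri) set" where
  "int_edges T = {(K, L). K \<in> T \<and> L \<in> T \<and> K \<noteq> L \<and> card (K \<inter> L) = 2}"

definition barycenter :: "tri \<Rightarrow> pt" where
  "barycenter K = (1/3) *\<^sub>R (\<Sum>a\<in>K. a)"

definition Dist_e :: "tri \<Rightarrow> tri \<Rightarrow> real" where
  "Dist_e K L = dist (barycenter K) (barycenter L)"

definition elen :: "tri \<Rightarrow> tri \<Rightarrow> real" where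
  "elen K L = Max {dist p q | p q. p \<in> K \<inter> L \<and> q \<in> K \<inter> L}"

definition area :: "tri \<Rightarrow> real" where
  "area K = Henstock_Kurzweil_Integration.content (convex hull K)"

definition H1 :: "tri set \<Rightarrow> bool" where
  "H1 T \<longleftrightarrow> (\<forall>(K, L)\<in>int_edges T. \<forall>p\<in>K \<inter> L. \<forall>q\<in>K \<inter> L.
      (barycenter K - barycenter L) \<bullet> (p - q) = 0)"

definition H2 :: "tri set \<Rightarrow> bool" where
  "H2 T \<longleftrightarrow> (\<forall>K\<in>T. \<forall>a\<in>K. \<forall>b\<in>K. \<forall>c\<in>K. b \<noteq> a \<and> c \<noteq> a \<longrightarrow> (b - a) \<bullet> (c - a) \<ge> 0)"

text \<open>P0 functions: a real value per triangle, tri => real.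
  Continuous P1 functions: given by their nodal values pt => real (only the values at
  mesh vertices matter); on a triangle K the function is the affine interpolant below.\<close>

definition grad :: "tri \<Rightarrow> (pt \<Rightarrow> real) \<Rightarrow> pt" where
  "grad K w = (THE g. \<forall>a\<in>K. \<forall>b\<in>K. g \<bullet> (b - a) = w b - w a)"

definition p1_on :: "tri \<Rightarrow> (pt \<Rightarrow> real) \<Rightarrow> pt \<Rightarrow> real" where
  "p1_on K w x = w (SOME a. a \<in> K) + grad K w \<bullet> (x - (SOME a. a \<in> K))"

definition ip00 :: "tri set \<Rightarrow> (tri \<Rightarrow> real) \<Rightarrow> (tri \<Rightarrow> real) \<Rightarrow> real" where
  "ip00 T f g = (\<Sum>K\<in>T. integral (convex hull K) (\<lambda>x. f K * g K))"

definition ip01 :: "tri set \<Rightarrow> (tri \<Rightarrow> real) \<Rightarrow> (pt \<Rightarrow> real) \<Rightarrow> real" where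
  "ip01 T u w = (\<Sum>K\<in>T. integral (convex hull K) (\<lambda>x. u K * p1_on K w x))"

definition ipgrad :: "tri set \<Rightarrow> (pt \<Rightarrow> real) \<Rightarrow> (pt \<Rightarrow> real) \<Rightarrow> real" where
  "ipgrad T v w = (\<Sum>K\<in>T. integral (convex hull K) (\<lambda>x. grad K v \<bullet> grad K w))"

text \<open>Mass-lumped product (f,g)_h = integral of the nodal P1 interpolant of f g.\<close>
definition iplump :: "tri set \<Rightarrow> (pt \<Rightarrow> real) \<Rightarrow> (pt \<Rightarrow> real) \<Rightarrow> real" where
  "iplump T f g = (\<Sum>K\<in>T. integral (convex hull K) (p1_on K (\<lambda>a. f a * g a)))"

definition ppart :: "real \<Rightarrow> real" where "ppart x = max x 0"
definition npart :: "real \<Rightarrow> real" where "npart x = - min x 0"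

text \<open>The volume term vanishes (broken gradients of P0
  functions are zero) and \<Pi>0 \<mu> = \<mu>. Each interior edge occurs twice in int_edges (both
  orientations) and the edge term does not depend on the orientation, hence the factor 1/2.
  The integrand on e is constant, so the edge integral is |e| times it.\<close>
definition a_upw :: "tri set \<Rightarrow> (tri \<Rightarrow> real) \<Rightarrow> (tri \<Rightarrow> real) \<Rightarrow> (tri \<Rightarrow> real) \<Rightarrow> real" where
  "a_upw T mu u ub = (1/2) * (\<Sum>(K, L)\<in>int_edges T.
      (elen K L / Dist_e K L) *
      (ppart (mu K - mu L) * u K - npart (mu K - mu L) * u L) * (ub K - ub L))"

text \<open>Discrete energy (the v^2 term is the mass-lumped one, consistent with the scheme).\<close>
definition energy :: "tri set \<Rightarrow> real \<Rightarrow> real \<Rightarrow> real \<Rightarrow> real \<Rightarrow> real \<Rightarrow> real \<Rightarrow>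
    (tri \<Rightarrow> real) \<Rightarrow> (pt \<Rightarrow> real) \<Rightarrow> real" where
  "energy T k0 k1 k2 k3 k4 \<epsilon> u v =
     (\<Sum>K\<in>T. integral (convex hull K) (\<lambda>x. k0 * ((u K + \<epsilon>) * ln (u K + \<epsilon>))))
     - k1 * ip01 T u v
     + (k1 * k2 / (2 * k4)) * ipgrad T v v
     + (k1 * k3 / (2 * k4)) * iplump T v v"

end

theory Submission
  imports Defs
begin

(* Testing the transport equation with \<mu>^(m+1) gives (\<delta>t u^(m+1), \<mu>^(m+1)) = -a_upw(\<mu>; u\<oplus>, \<mu>) \<le> 0:
   on every edge the upwind flux times the jump of \<mu> equals
   ((\<mu>K - \<mu>L)\<oplus>)^2 uK + ((\<mu>K - \<mu>L)\<ominus>)^2 uL.  Testing it with 1 gives conservation of mass.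
   Testing the equation for \<mu> with u^(m+1) - u^m and using the tangent inequality of the convex
   function s \<mapsto> s ln s bounds the increase of the entropy part of the energy by
   k1 (u^(m+1) - u^m, v^(m+1)).  Testing the equation for v with v^(m+1) and with v^m, the inequality
   2 a(v,w) \<le> a(v,v) + a(w,w) for the gradient and the mass-lumped form bounds the increase of the
   quadratic part by k1 (u^m, v^(m+1) - v^m).  These two bounds exactly compensate the change of the
   coupling term -k1 (u, v). *)

section \<open>Affine interpolation on a triangle\<close>

lemma ex1_inner_pair_eq:
  fixes p q :: "real^2"
  assumes det: "p$1 * q$2 - p$2 * q$1 \<noteq> 0"
  shows "\<exists>!g. g \<bullet> p = r \<and> g \<bullet> q = s"
proof -
  define d where "d = p$1 * q$2 - p$2 * q$1"
  have d: "d \<noteq> 0" using det by (simp add: d_def)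
  \<comment> \<open>Cramer's rule\<close>
  define g :: "real^2" where "g = (\<chi> i. if i = 1 then (r * q$2 - s * p$2) / d else (s * p$1 - r * q$1) / d)"
  have "g \<bullet> p = ((r * q$2 - s * p$2) * p$1 + (s * p$1 - r * q$1) * p$2) / d"
       "g \<bullet> q = ((r * q$2 - s * p$2) * q$1 + (s * p$1 - r * q$1) * q$2) / d"
    by (simp_all add: g_def inner_vec_def sum_2 add_divide_distrib)
  moreover have "(r * q$2 - s * p$2) * p$1 + (s * p$1 - r * q$1) * p$2 = r * d"
       "(r * q$2 - s * p$2) * q$1 + (s * p$1 - r * q$1) * q$2 = s * d"
    by (simp_all add: d_def algebra_simps)
  ultimately have "g \<bullet> p = r \<and> g \<bullet> q = s"
    using d by simp
  moreover have "h = g" if "h \<bullet> p = r \<and> h \<bullet> q = s" for h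
  proof -
    have hp: "h$1 * p$1 + h$2 * p$2 = r" and hq: "h$1 * q$1 + h$2 * q$2 = s"
      using that by (simp_all add: inner_vec_def sum_2 mult.commute)
    have "h$1 * d = q$2 * (h$1 * p$1 + h$2 * p$2) - p$2 * (h$1 * q$1 + h$2 * q$2)"
         "h$2 * d = p$1 * (h$1 * q$1 + h$2 * q$2) - q$1 * (h$1 * p$1 + h$2 * p$2)"
      by (simp_all add: d_def algebra_simps)
    then have "h$1 = (r * q$2 - s * p$2) / d" "h$2 = (s * p$1 - r * q$1) / d"
      unfolding hp hq using d by (simp_all add: eq_divide_eq mult.commute)
    then show ?thesis by (simp add: g_def vec_eq_iff forall_2)
  qed
  ultimately show ?thesis by blast
qed

lemma cross_neq_0_if_not_collinear:
  fixes a b c :: "real^2"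
  assumes "\<not> collinear {a, b, c}"
  shows "(b - a)$1 * (c - a)$2 - (b - a)$2 * (c - a)$1 \<noteq> 0"
proof
  define p q where "p = b - a" and "q = c - a"
  assume "(b - a)$1 * (c - a)$2 - (b - a)$2 * (c - a)$1 = 0"
  then have cross: "p$1 * q$2 = p$2 * q$1" by (simp add: p_def q_def)
  have "p = 0 \<or> (\<exists>t. q = t *\<^sub>R p)"
  proof (cases "p$1 = 0")
    case True
    show ?thesis
    proof (cases "p$2 = 0")
      case False
      with True cross have "q = (q$2 / p$2) *\<^sub>R p"
        by (simp add: vec_eq_iff forall_2 field_simps)
      then show ?thesis by blast
    qed (use True in \<open>simp add: vec_eq_iff forall_2\<close>)
  next
    case False
    with cross have "q = (q$1 / p$1) *\<^sub>R p"
      by (simp add: vec_eq_iff forall_2 field_simps)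
    then show ?thesis by blast
  qed
  then have "collinear {0, p, q}" by (auto simp: collinear_lemma)
  then have "collinear {b, a, c}" by (simp add: collinear_3 p_def q_def)
  with assms show False by (simp add: insert_commute)
qed

lemma triangle_finite: "is_triangle K \<Longrightarrow> finite K"
  unfolding is_triangle_def by (metis card.infinite zero_neq_numeral)

lemma ex1_triangle_gradient:
  assumes "is_triangle K"
  shows "\<exists>!g. \<forall>x\<in>K. \<forall>y\<in>K. g \<bullet> (y - x) = w y - w x"
proof -
  obtain a b c where K: "K = {a, b, c}" and nc: "\<not> collinear {a, b, c}"
    using assms unfolding is_triangle_def card_3_iff by blast
  have "(\<forall>x\<in>K. \<forall>y\<in>K. g \<bullet> (y - x) = w y - w x) \<longleftrightarrow>
        g \<bullet> (b - a) = w b - w a \<and> g \<bullet> (c - a) = w c - w a" for g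
  proof
    assume "g \<bullet> (b - a) = w b - w a \<and> g \<bullet> (c - a) = w c - w a"
    then have base: "\<forall>z\<in>K. g \<bullet> (z - a) = w z - w a" using K by auto
    show "\<forall>x\<in>K. \<forall>y\<in>K. g \<bullet> (y - x) = w y - w x"
    proof (intro ballI)
      fix x y assume "x \<in> K" "y \<in> K"
      with base have "g \<bullet> (y - a) - g \<bullet> (x - a) = w y - w x" by simp
      then show "g \<bullet> (y - x) = w y - w x" by (simp add: inner_diff_right)
    qed
  qed (use K in auto)
  then show ?thesis
    using ex1_inner_pair_eq[OF cross_neq_0_if_not_collinear[OF nc]] by simp
qed

lemma grad_inner_diff:
  assumes "is_triangle K" "x \<in> K" "y \<in> K"
  shows "grad K w \<bullet> (y - x) = w y - w x"
  using theI'[OF ex1_triangle_gradient[OF assms(1), of w]] assms(2,3)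
  unfolding grad_def by blast

lemma p1_on_convex_combination:
  assumes "is_triangle K" "sum u K = 1"
  shows "p1_on K w (\<Sum>y\<in>K. u y *\<^sub>R y) = (\<Sum>y\<in>K. u y * w y)"
proof -
  define a where "a = (SOME a. a \<in> K)"
  have "K \<noteq> {}" using assms(1) by (auto simp: is_triangle_def)
  then have a: "a \<in> K" unfolding a_def by (simp add: some_in_eq)
  have "(\<Sum>y\<in>K. u y *\<^sub>R y) - a = (\<Sum>y\<in>K. u y *\<^sub>R (y - a))"
    using assms(2) by (simp add: scaleR_diff_right sum_subtractf flip: scaleR_sum_left)
  then have "grad K w \<bullet> ((\<Sum>y\<in>K. u y *\<^sub>R y) - a) = (\<Sum>y\<in>K. u y * (w y - w a))"
    by (simp add: inner_sum_right grad_inner_diff[OF assms(1) a])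
  also have "\<dots> = (\<Sum>y\<in>K. u y * w y) - w a"
    using assms(2) by (simp add: right_diff_distrib sum_subtractf flip: sum_distrib_right)
  finally show ?thesis unfolding p1_on_def a_def [symmetric] by simp
qed

lemma p1_on_mono:
  assumes "is_triangle K" "\<forall>a\<in>K. f a \<le> g a" "x \<in> convex hull K"
  shows "p1_on K f x \<le> p1_on K g x"
proof -
  obtain u where u: "\<forall>y\<in>K. 0 \<le> u y" "sum u K = 1" "x = (\<Sum>y\<in>K. u y *\<^sub>R y)"
    using assms(3) unfolding convex_hull_finite[OF triangle_finite[OF assms(1)]] by auto
  have "(\<Sum>y\<in>K. u y * f y) \<le> (\<Sum>y\<in>K. u y * g y)"
    using u(1) assms(2) by (intro sum_mono mult_left_mono) auto
  then show ?thesis by (simp add: u(3) p1_on_convex_combination[OF assms(1) u(2)])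
qed

lemma p1_on_linear:
  assumes "is_triangle K" "x \<in> convex hull K"
  shows "p1_on K (\<lambda>a. \<alpha> * f a + \<beta> * g a) x = \<alpha> * p1_on K f x + \<beta> * p1_on K g x"
proof -
  obtain u where u: "sum u K = 1" "x = (\<Sum>y\<in>K. u y *\<^sub>R y)"
    using assms(2) unfolding convex_hull_finite[OF triangle_finite[OF assms(1)]] by auto
  show ?thesis
    by (simp add: u(2) p1_on_convex_combination[OF assms(1) u(1)] sum.distrib
        sum_distrib_left algebra_simps)
qed

lemma continuous_on_compact_integrable:
  fixes f :: "'a::euclidean_space \<Rightarrow> real"
  assumes "compact S" "continuous_on S f"
  shows "f integrable_on S"
proof -
  obtain B where B: "\<And>x. x \<in> S \<Longrightarrow> norm (f x) \<le> B"
    using compact_imp_bounded[OF compact_continuous_image[OF assms(2,1)]]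
    by (auto simp: bounded_iff)
  have S: "S \<in> lmeasurable" using assms(1) by (rule lmeasurable_compact)
  have "f absolutely_integrable_on S"
    using B integrable_on_const[OF S]
      continuous_imp_measurable_on_sets_lebesgue[OF assms(2) fmeasurableD[OF S]]
    by (intro measurable_bounded_by_integrable_imp_absolutely_integrable[where g = "\<lambda>x. B"])
       (auto simp: fmeasurableD[OF S])
  then show ?thesis by (simp add: absolutely_integrable_on_def)
qed

lemma integral_const_convex_hull:
  assumes "finite K"
  shows "integral (convex hull K) (\<lambda>x. c) = c * area K"
proof -
  have hull: "compact (convex hull K)" using assms by (rule finite_imp_compact_convex_hull)
  have "integral (convex hull K) (\<lambda>x. c *\<^sub>R 1) = c * measure lebesgue (convex hull K)"
    by (simp only: integral_cmul lmeasure_integral[OF lmeasurable_compact[OF hull]]) simp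
  also have "measure lebesgue (convex hull K) = area K"
    using hull unfolding area_def by (simp add: compact_imp_closed borel_closed)
  finally show ?thesis by simp
qed

definition p1_integral :: "tri \<Rightarrow> (pt \<Rightarrow> real) \<Rightarrow> real" where
  "p1_integral K w = integral (convex hull K) (p1_on K w)"

lemma p1_on_integrable: "is_triangle K \<Longrightarrow> p1_on K w integrable_on convex hull K"
  by (intro continuous_on_compact_integrable finite_imp_compact_convex_hull triangle_finite)
     (auto simp: p1_on_def intro!: continuous_intros)

lemma p1_integral_linear:
  assumes "is_triangle K"
  shows "p1_integral K (\<lambda>a. \<alpha> * f a + \<beta> * g a) = \<alpha> * p1_integral K f + \<beta> * p1_integral K g"
proof -
  have "p1_integral K (\<lambda>a. \<alpha> * f a + \<beta> * g a)
      = integral (convex hull K) (\<lambda>x. \<alpha> * p1_on K f x + \<beta> * p1_on K g x)"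
    unfolding p1_integral_def by (intro integral_cong p1_on_linear[OF assms])
  also have "\<dots> = integral (convex hull K) (\<lambda>x. \<alpha> * p1_on K f x)
                    + integral (convex hull K) (\<lambda>x. \<beta> * p1_on K g x)"
    using p1_on_integrable[OF assms] by (intro integral_add integrable_on_mult_right)
  also have "\<dots> = \<alpha> * p1_integral K f + \<beta> * p1_integral K g"
    unfolding p1_integral_def by simp
  finally show ?thesis .
qed

lemma p1_integral_mono:
  assumes "is_triangle K" "\<forall>a\<in>K. f a \<le> g a"
  shows "p1_integral K f \<le> p1_integral K g"
  unfolding p1_integral_def
  using assms by (intro integral_le p1_on_integrable p1_on_mono)

section \<open>The discrete inner products cell by cell\<close>

lemma area_nonneg: "0 \<le> area K"
  by (simp add: area_def)

lemma ip00_eq_sum: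
  assumes "\<And>K. K \<in> T \<Longrightarrow> is_triangle K"
  shows "ip00 T f g = (\<Sum>K\<in>T. area K * (f K * g K))"
  unfolding ip00_def using assms
  by (intro sum.cong) (simp_all add: integral_const_convex_hull triangle_finite mult.commute)

lemma ip01_eq_sum: "ip01 T u w = (\<Sum>K\<in>T. u K * p1_integral K w)"
  by (simp add: ip01_def p1_integral_def)

lemma ipgrad_eq_sum:
  assumes "\<And>K. K \<in> T \<Longrightarrow> is_triangle K"
  shows "ipgrad T v w = (\<Sum>K\<in>T. area K * (grad K v \<bullet> grad K w))"
  unfolding ipgrad_def using assms
  by (intro sum.cong) (simp_all add: integral_const_convex_hull triangle_finite mult.commute)

lemma iplump_eq_sum: "iplump T f g = (\<Sum>K\<in>T. p1_integral K (\<lambda>a. f a * g a))"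
  by (simp add: iplump_def p1_integral_def)

lemma iplump_mono:
  assumes "\<And>K. K \<in> T \<Longrightarrow> is_triangle K"
    and "\<And>K a. K \<in> T \<Longrightarrow> a \<in> K \<Longrightarrow> f a * g a \<le> f' a * g' a"
  shows "iplump T f g \<le> iplump T f' g'"
  unfolding iplump_eq_sum using assms by (intro sum_mono p1_integral_mono) auto

lemma iplump_polarization_le:
  assumes tri: "\<And>K. K \<in> T \<Longrightarrow> is_triangle K"
  shows "2 * iplump T v w \<le> iplump T v v + iplump T w w"
proof -
  have "p1_integral K (\<lambda>a. v a * w a)
          \<le> 1/2 * p1_integral K (\<lambda>a. v a * v a) + 1/2 * p1_integral K (\<lambda>a. w a * w a)"
    if "K \<in> T" for K
  proof -
    have "p1_integral K (\<lambda>a. v a * w a)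
            \<le> p1_integral K (\<lambda>a. 1/2 * (v a * v a) + 1/2 * (w a * w a))"
    proof (intro p1_integral_mono ballI)
      fix a
      have "0 \<le> (v a - w a)\<^sup>2" by simp
      then show "v a * w a \<le> 1/2 * (v a * v a) + 1/2 * (w a * w a)"
        by (simp add: power2_eq_square field_simps)
    qed (use tri that in auto)
    also have "\<dots> = 1/2 * p1_integral K (\<lambda>a. v a * v a) + 1/2 * p1_integral K (\<lambda>a. w a * w a)"
      using tri[OF that] by (rule p1_integral_linear)
    finally show ?thesis .
  qed
  then have "iplump T v w \<le> (\<Sum>K\<in>T. 1/2 * p1_integral K (\<lambda>a. v a * v a)
                                     + 1/2 * p1_integral K (\<lambda>a. w a * w a))"
    unfolding iplump_eq_sum by (rule sum_mono)
  then show ?thesis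
    by (simp add: iplump_eq_sum sum.distrib flip: sum_divide_distrib)
qed

lemma ipgrad_polarization_le:
  assumes "\<And>K. K \<in> T \<Longrightarrow> is_triangle K"
  shows "2 * ipgrad T v w \<le> ipgrad T v v + ipgrad T w w"
proof -
  have "area K * (2 * (a \<bullet> b)) \<le> area K * (a \<bullet> a + b \<bullet> b)" for K and a b :: pt
  proof (intro mult_left_mono area_nonneg)
    have "0 \<le> (a - b) \<bullet> (a - b)" by simp
    then show "2 * (a \<bullet> b) \<le> a \<bullet> a + b \<bullet> b"
      by (simp add: inner_diff_left inner_diff_right inner_commute)
  qed
  then have "(\<Sum>K\<in>T. area K * (2 * (grad K v \<bullet> grad K w)))
               \<le> (\<Sum>K\<in>T. area K * (grad K v \<bullet> grad K v + grad K w \<bullet> grad K w))"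
    by (rule sum_mono)
  moreover have "2 * ipgrad T v w = (\<Sum>K\<in>T. area K * (2 * (grad K v \<bullet> grad K w)))"
    by (simp add: ipgrad_eq_sum[OF assms] sum_distrib_left mult.left_commute)
  moreover have "ipgrad T v v + ipgrad T w w
      = (\<Sum>K\<in>T. area K * (grad K v \<bullet> grad K v + grad K w \<bullet> grad K w))"
    by (simp add: ipgrad_eq_sum[OF assms] distrib_left sum.distrib)
  ultimately show ?thesis by simp
qed

section \<open>The upwind form\<close>

lemma upwind_flux_mult_jump:
  "(ppart d * a - npart d * b) * d = (ppart d)\<^sup>2 * a + (npart d)\<^sup>2 * b"
proof (cases "0 \<le> d")
  case True
  then have "ppart d = d" "npart d = 0" by (simp_all add: ppart_def npart_def)
  then show ?thesis by (simp add: power2_eq_square)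
next
  case False
  then have "ppart d = 0" "npart d = - d" by (simp_all add: ppart_def npart_def)
  then show ?thesis by (simp add: power2_eq_square)
qed

lemma elen_nonneg:
  assumes "finite (K \<inter> L)" "p \<in> K \<inter> L"
  shows "0 \<le> elen K L"
proof -
  have "{dist p q | p q. p \<in> K \<inter> L \<and> q \<in> K \<inter> L}
          = (\<lambda>(p, q). dist p q) ` ((K \<inter> L) \<times> (K \<inter> L))" by auto
  then have "finite {dist p q | p q. p \<in> K \<inter> L \<and> q \<in> K \<inter> L}"
    using assms(1) by simp
  moreover have "dist p p \<in> {dist p q | p q. p \<in> K \<inter> L \<and> q \<in> K \<inter> L}"
    using assms(2) by blast
  ultimately have "dist p p \<le> elen K L" unfolding elen_def by (rule Max_ge)
  then show ?thesis by simp
qed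

lemma a_upw_self_nonneg:
  assumes "\<And>K. K \<in> T \<Longrightarrow> 0 \<le> u K"
  shows "0 \<le> a_upw T mu u mu"
proof -
  have "0 \<le> elen K L / Dist_e K L * ((ppart (mu K - mu L))\<^sup>2 * u K + (npart (mu K - mu L))\<^sup>2 * u L)"
    if "(K, L) \<in> int_edges T" for K L
  proof -
    from that have KL: "K \<in> T" "L \<in> T" "card (K \<inter> L) = 2" by (auto simp: int_edges_def)
    then obtain p where "p \<in> K \<inter> L" by (metis card.empty all_not_in_conv zero_neq_numeral)
    then have "0 \<le> elen K L"
      using KL(3) by (intro elen_nonneg) (auto intro: card_ge_0_finite)
    moreover have "0 \<le> Dist_e K L" by (simp add: Dist_e_def)
    ultimately show ?thesis
      using assms KL by (intro mult_nonneg_nonneg add_nonneg_nonneg divide_nonneg_nonneg) auto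
  qed
  then show ?thesis
    unfolding a_upw_def upwind_flux_mult_jump mult.assoc
    by (intro mult_nonneg_nonneg sum_nonneg) auto
qed

lemma a_upw_const_right: "a_upw T mu u (\<lambda>K. c) = 0"
  by (simp add: a_upw_def)

section \<open>One step of the scheme\<close>

lemma xlnx_tangent_le:
  fixes x y :: real
  assumes "0 < x" "0 < y"
  shows "x * ln x - y * ln y \<le> (ln x + 1) * (x - y)"
proof -
  have "ln x - ln y \<le> x / y - 1"
    using assms ln_le_minus_one[of "x / y"] by (simp add: ln_div)
  then have "y * (ln x - ln y) \<le> y * (x / y - 1)"
    using assms by (intro mult_left_mono) auto
  with assms show ?thesis by (simp add: algebra_simps)
qed

context
  fixes T :: "tri set" and \<Delta>t :: real and um u1 mu1 w :: "tri \<Rightarrow> real"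
  assumes tri: "\<And>K. K \<in> T \<Longrightarrow> is_triangle K"
    and dt: "0 < \<Delta>t"
    and transport: "\<forall>ub. ip00 T (\<lambda>K. (u1 K - um K) / \<Delta>t) ub + a_upw T mu1 w ub = 0"
begin

lemma transport_step_mass_conservation: "(\<Sum>K\<in>T. area K * (u1 K - um K)) = 0"
proof -
  have "ip00 T (\<lambda>K. (u1 K - um K) / \<Delta>t) (\<lambda>K. 1) = 0"
    using transport a_upw_const_right by (metis add.right_neutral)
  with dt show ?thesis by (simp add: ip00_eq_sum[OF tri] sum_divide_distrib [symmetric])
qed

lemma transport_step_dissipation:
  assumes "\<And>K. K \<in> T \<Longrightarrow> 0 \<le> w K"
  shows "(\<Sum>K\<in>T. area K * (mu1 K * (u1 K - um K))) \<le> 0"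
proof -
  have "ip00 T (\<lambda>K. (u1 K - um K) / \<Delta>t) mu1 = - a_upw T mu1 w mu1"
    using transport by (simp add: eq_neg_iff_add_eq_0)
  also have "\<dots> \<le> 0" using a_upw_self_nonneg[OF assms] by simp
  finally show ?thesis
    using dt by (simp add: ip00_eq_sum[OF tri] sum_divide_distrib [symmetric] divide_le_0_iff
        mult.commute mult.left_commute)
qed

end

definition entropy :: "tri set \<Rightarrow> real \<Rightarrow> real \<Rightarrow> (tri \<Rightarrow> real) \<Rightarrow> real" where
  "entropy T k0 \<epsilon> u = (\<Sum>K\<in>T. integral (convex hull K) (\<lambda>x. k0 * ((u K + \<epsilon>) * ln (u K + \<epsilon>))))"

lemma energy_eq_entropy:
  "energy T k0 k1 k2 k3 k4 \<epsilon> u v = entropy T k0 \<epsilon> u - k1 * ip01 T u v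
     + (k1 * k2 / (2 * k4)) * ipgrad T v v + (k1 * k3 / (2 * k4)) * iplump T v v"
  by (simp add: energy_def entropy_def)

lemma entropy_step_le:
  assumes tri: "\<And>K. K \<in> T \<Longrightarrow> is_triangle K" and k0: "0 \<le> k0"
    and um_pos: "\<forall>K\<in>T. um K + \<epsilon> > 0" and u1_pos: "\<forall>K\<in>T. u1 K + \<epsilon> > 0"
    and mass: "(\<Sum>K\<in>T. area K * (u1 K - um K)) = 0"
    and dissipation: "(\<Sum>K\<in>T. area K * (mu1 K * (u1 K - um K))) \<le> 0"
    and potential: "\<forall>mb. ip00 T mu1 mb - k0 * ip00 T (\<lambda>K. ln (u1 K + \<epsilon>)) mb
                      + k1 * ip01 T mb v1 = 0"
  shows "entropy T k0 \<epsilon> u1 - entropy T k0 \<epsilon> um \<le> k1 * (ip01 T u1 v1 - ip01 T um v1)"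
proof -
  define \<delta> where "\<delta> K = u1 K - um K" for K
  define L where "L K = ln (u1 K + \<epsilon>)" for K
  have tangent: "(u1 K + \<epsilon>) * ln (u1 K + \<epsilon>) - (um K + \<epsilon>) * ln (um K + \<epsilon>) \<le> (L K + 1) * \<delta> K"
    if "K \<in> T" for K
    using xlnx_tangent_le[of "u1 K + \<epsilon>" "um K + \<epsilon>"] um_pos u1_pos that
    by (simp add: L_def \<delta>_def)
  have "entropy T k0 \<epsilon> u1 - entropy T k0 \<epsilon> um
      = (\<Sum>K\<in>T. area K * (k0 * ((u1 K + \<epsilon>) * ln (u1 K + \<epsilon>) - (um K + \<epsilon>) * ln (um K + \<epsilon>))))"
    by (simp add: entropy_def integral_const_convex_hull triangle_finite tri sum_subtractf
        algebra_simps cong: sum.cong)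
  also have "\<dots> \<le> (\<Sum>K\<in>T. area K * (k0 * ((L K + 1) * \<delta> K)))"
    using tangent k0 by (intro sum_mono mult_left_mono area_nonneg) simp_all
  also have "\<dots> = k0 * (\<Sum>K\<in>T. area K * (L K * \<delta> K)) + k0 * (\<Sum>K\<in>T. area K * \<delta> K)"
    by (simp add: sum_distrib_left sum.distrib algebra_simps)
  also have "\<dots> = (\<Sum>K\<in>T. area K * (mu1 K * \<delta> K)) + k1 * ip01 T \<delta> v1"
    using potential[rule_format, of \<delta>] mass
    by (simp add: ip00_eq_sum[OF tri] L_def \<delta>_def)
  also have "\<dots> \<le> k1 * (ip01 T u1 v1 - ip01 T um v1)"
    using dissipation by (simp add: \<delta>_def ip01_eq_sum sum_subtractf left_diff_distrib)
  finally show ?thesis .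
qed

lemma signal_step_le:
  assumes tri: "\<And>K. K \<in> T \<Longrightarrow> is_triangle K"
    and tau: "0 \<le> \<tau>" and dt: "0 < \<Delta>t" and k2: "0 \<le> k2" and k3: "0 \<le> k3"
    and signal: "\<forall>vb. \<tau> * iplump T (\<lambda>x. (v1 x - vm x) / \<Delta>t) vb + k2 * ipgrad T v1 vb
                     + k3 * iplump T v1 vb - k4 * ip01 T um vb = 0"
  shows "k2 * (ipgrad T v1 v1 - ipgrad T vm vm) + k3 * (iplump T v1 v1 - iplump T vm vm)
           \<le> 2 * k4 * (ip01 T um v1 - ip01 T um vm)"
proof -
  define d where "d x = (v1 x - vm x) / \<Delta>t" for x
  have tested: "\<tau> * (iplump T d v1 - iplump T d vm) + k2 * (ipgrad T v1 v1 - ipgrad T v1 vm)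
      + k3 * (iplump T v1 v1 - iplump T v1 vm) = k4 * (ip01 T um v1 - ip01 T um vm)"
    using signal[rule_format, of v1] signal[rule_format, of vm]
    unfolding d_def [symmetric] by (simp add: algebra_simps)
  have "iplump T d vm \<le> iplump T d v1"
  proof (rule iplump_mono[OF tri])
    fix a
    have "0 \<le> (v1 a - vm a)\<^sup>2 / \<Delta>t" using dt by simp
    then show "d a * vm a \<le> d a * v1 a"
      by (simp add: d_def power2_eq_square diff_divide_distrib add_divide_distrib algebra_simps)
  qed
  then have "0 \<le> \<tau> * (iplump T d v1 - iplump T d vm)"
    using tau by simp
  moreover have "k2 * (ipgrad T v1 v1 - ipgrad T vm vm) \<le> k2 * (2 * (ipgrad T v1 v1 - ipgrad T v1 vm))"
    using ipgrad_polarization_le[of T v1 vm, OF tri] k2 by (intro mult_left_mono) simp_all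
  moreover have "k3 * (iplump T v1 v1 - iplump T vm vm) \<le> k3 * (2 * (iplump T v1 v1 - iplump T v1 vm))"
    using iplump_polarization_le[of T v1 vm, OF tri] k3 by (intro mult_left_mono) simp_all
  ultimately show ?thesis
    using tested by linarith
qed

theorem mainTheorem5:
  fixes T :: "(real^2) set set"
    and k0 k1 k2 k3 k4 \<tau> \<Delta>t \<epsilon> :: real
    and um u1 mu1 :: "(real^2) set \<Rightarrow> real"
    and vm v1 :: "real^2 \<Rightarrow> real"
  assumes mesh: "admissible_mesh T" and hyp1: "H1 T" and hyp2: "H2 T"
    and k0: "k0 > 0" and k1: "k1 > 0" and k2: "k2 > 0" and k3: "k3 > 0" and k4: "k4 > 0"
    and tau: "\<tau> = 0 \<or> \<tau> = 1" and dt: "\<Delta>t > 0" and eps: "\<epsilon> > 0"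
    and um_pos: "\<forall>K\<in>T. um K + \<epsilon> > 0"
    and step1: "\<forall>vb. \<tau> * iplump T (\<lambda>x. (v1 x - vm x) / \<Delta>t) vb + k2 * ipgrad T v1 vb
                     + k3 * iplump T v1 vb - k4 * ip01 T um vb = 0"
    and u1_pos: "\<forall>K\<in>T. u1 K + \<epsilon> > 0"
    and step2a: "\<forall>ub. ip00 T (\<lambda>K. (u1 K - um K) / \<Delta>t) ub
                      + a_upw T mu1 (\<lambda>K. ppart (u1 K)) ub = 0"
    and step2b: "\<forall>mb. ip00 T mu1 mb - k0 * ip00 T (\<lambda>K. ln (u1 K + \<epsilon>)) mb
                      + k1 * ip01 T mb v1 = 0"
  shows "a_upw T mu1 (\<lambda>K. ppart (u1 K)) mu1 \<ge> 0 \<and>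
         energy T k0 k1 k2 k3 k4 \<epsilon> u1 v1 \<le> energy T k0 k1 k2 k3 k4 \<epsilon> um vm"
proof
  have tri: "\<And>K. K \<in> T \<Longrightarrow> is_triangle K"
    using mesh by (simp add: admissible_mesh_def)
  have u1_plus: "\<And>K. K \<in> T \<Longrightarrow> 0 \<le> ppart (u1 K)"
    by (simp add: ppart_def)
  show "a_upw T mu1 (\<lambda>K. ppart (u1 K)) mu1 \<ge> 0"
    using u1_plus by (rule a_upw_self_nonneg)
  have entropy: "entropy T k0 \<epsilon> u1 - entropy T k0 \<epsilon> um \<le> k1 * (ip01 T u1 v1 - ip01 T um v1)"
    using tri k0 um_pos u1_pos step2b
      transport_step_mass_conservation[OF tri dt step2a]
      transport_step_dissipation[OF tri dt step2a u1_plus]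
    by (intro entropy_step_le) auto
  have "k2 * (ipgrad T v1 v1 - ipgrad T vm vm) + k3 * (iplump T v1 v1 - iplump T vm vm)
          \<le> 2 * k4 * (ip01 T um v1 - ip01 T um vm)"
    using tau dt k2 k3 step1 by (intro signal_step_le[OF tri]) auto
  then have "k1 / (2 * k4) * (k2 * (ipgrad T v1 v1 - ipgrad T vm vm) + k3 * (iplump T v1 v1 - iplump T vm vm))
          \<le> k1 / (2 * k4) * (2 * k4 * (ip01 T um v1 - ip01 T um vm))"
    using k1 k4 by (intro mult_left_mono) auto
  also have "\<dots> = k1 * (ip01 T um v1 - ip01 T um vm)"
    using k4 by simp
  finally have signal: "k1 / (2 * k4) * (k2 * (ipgrad T v1 v1 - ipgrad T vm vm)
      + k3 * (iplump T v1 v1 - iplump T vm vm)) \<le> k1 * (ip01 T um v1 - ip01 T um vm)" .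
  with entropy show "energy T k0 k1 k2 k3 k4 \<epsilon> u1 v1 \<le> energy T k0 k1 k2 k3 k4 \<epsilon> um vm"
    unfolding energy_eq_entropy by (simp add: algebra_simps)
qed

end
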